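(* Let $G_{\mathrm{syn}}$ be an admissible group w.r.t. a prefix $P=\forall x_1,\dots,x_n\,\exists y_1(D_1),\dots,y_k(D_k)$. For every $g\in G_{\mathrm{syn}}$, the function $\mathcal S(P)\to\mathcal S(P)$, $s\mapsto g(s)$, lies in the associated group of $G_{\mathrm{syn}}$.
   Context: $X=\{x_1,\dots,x_n\}$, $Y=\{y_1,\dots,y_k\}$ are finite disjoint sets of propositional variables; $\operatorname{BF}(V)$ the propositional formulas over $V\subseteq X\cup Y$; $\mathcal A(V)$ the assignments $V\to\{\top,\bot\}$; $[\phi]_\sigma$ the truth value. Dependency sets $D_j\subseteq X$. An interpretation is $s=(s_1,\dots,s_k)$ with $s_j:\{\top,\bot\}^{|D_j|}\to\{\top,\bot\}$; $\mathcal S(P)$ the set of interpretations. For $\sigma\in\mathcal A(X)$, $\sigma_s\in\mathcal A(X\cup Y)$ equals $\sigma$ on $X$ and $\sigma_s(y_j)=s_j$ evaluated at $\sigma$'s values on $D_j$. For $g:\operatorname{BF}(V)\to\operatorname{BF}(V)$ and $\rho\in\mathcal A(V)$, $g(\rho)(v)=[g(v)]_\rho$; $g$ preserves propositional satisfiability if $[g(\phi)]_\rho=[\phi]_{g(\rho)}$ always. A formula in $\operatorname{BF}(Y)$ depends on $x_i$ if it contains some $y_j$ with $x_i\in D_j$. A bijection $g$ of $\operatorname{BF}(X\cup Y)$ is admissible w.r.t. $P$ if it preserves propositional satisfiability, $g(x_i)\in\operatorname{BF}(X)$, $g(y_j)\in\operatorname{BF}(Y)$, and if $g(y_j)$ depends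 on $x_i$ then $g^{-1}(x_i)\in\operatorname{BF}(D_j)$. An admissible group is a subgroup of all admissible functions. For admissible $g$ and $\sigma\in\mathcal A(X)$, $g(\sigma)(x)=[g(x)]_\sigma$. For $g\in G_{\mathrm{syn}}$, $g(s)$ is the (well-defined) interpretation $t$ with $\sigma_t=g(g^{-1}(\sigma)_s)$ for all $\sigma\in\mathcal A(X)$. The associated group of $G_{\mathrm{syn}}$ is the set of all bijections $f:\mathcal S(P)\to\mathcal S(P)$ such that for every $s\in\mathcal S(P)$ and every $\sigma\in\mathcal A(X)$ there exists $g\in G_{\mathrm{syn}}$ with $g(\sigma)_{f(s)}=g(\sigma_s)$. *)

theory Defs
  imports Main
begin

text \<open>Propositional formulas over a set of variables of type 'v.
  Variables X are modelled by a finite type 'x, Y by a finite type 'y,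
  and X \<union> Y by the disjoint sum 'x + 'y.\<close>

datatype 'v form =
    FVar 'v
  | FTrue
  | FFalse
  | FNot "'v form"
  | FAnd "'v form" "'v form"
  | FOr "'v form" "'v form"
  | FImp "'v form" "'v form"
  | FIff "'v form" "'v form"

primrec eval :: "('v \<Rightarrow> bool) \<Rightarrow> 'v form \<Rightarrow> bool" where
  "eval \<rho> (FVar v) = \<rho> v"
| "eval \<rho> FTrue = True"
| "eval \<rho> FFalse = False"
| "eval \<rho> (FNot \<phi>) = (\<not> eval \<rho> \<phi>)"
| "eval \<rho> (FAnd \<phi> \<psi>) = (eval \<rho> \<phi> \<and> eval \<rho> \<psi>)"
| "eval \<rho> (FOr \<phi> \<psi>) = (eval \<rho> \<phi> \<or> eval \<rho> \<psi>)"
| "eval \<rho> (FImp \<phi> \<psi>) = (eval \<rho> \<phi> \<longrightarrow> eval \<rho> \<psi>)"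
| "eval \<rho> (FIff \<phi> \<psi>) = (eval \<rho> \<phi> \<longleftrightarrow> eval \<rho> \<psi>)"

primrec fvars :: "'v form \<Rightarrow> 'v set" where
  "fvars (FVar v) = {v}"
| "fvars FTrue = {}"
| "fvars FFalse = {}"
| "fvars (FNot \<phi>) = fvars \<phi>"
| "fvars (FAnd \<phi> \<psi>) = fvars \<phi> \<union> fvars \<psi>"
| "fvars (FOr \<phi> \<psi>) = fvars \<phi> \<union> fvars \<psi>"
| "fvars (FImp \<phi> \<psi>) = fvars \<phi> \<union> fvars \<psi>"
| "fvars (FIff \<phi> \<psi>) = fvars \<phi> \<union> fvars \<psi>"

definition BF :: "('x + 'y) set \<Rightarrow> ('x + 'y) form set" where
  "BF V = {\<phi>. fvars \<phi> \<subseteq> V}"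

definition act_asg :: "(('x + 'y) form \<Rightarrow> ('x + 'y) form) \<Rightarrow> (('x + 'y) \<Rightarrow> bool) \<Rightarrow> ('x + 'y) \<Rightarrow> bool" where
  "act_asg g \<rho> = (\<lambda>v. eval \<rho> (g (FVar v)))"

definition preserves_sat :: "(('x + 'y) form \<Rightarrow> ('x + 'y) form) \<Rightarrow> bool" where
  "preserves_sat g \<longleftrightarrow> (\<forall>\<phi> \<rho>. eval \<rho> (g \<phi>) = eval (act_asg g \<rho>) \<phi>)"

definition depends_on :: "('y \<Rightarrow> 'x set) \<Rightarrow> ('x + 'y) form \<Rightarrow> 'x \<Rightarrow> bool" where
  "depends_on D \<phi> x \<longleftrightarrow> (\<exists>j. Inr j \<in> fvars \<phi> \<and> x \<in> D j)"

definition admissible :: "('y \<Rightarrow> 'x set) \<Rightarrow> (('x + 'y) form \<Rightarrow> ('x + 'y) form) \<Rightarrow> bool" where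
  "admissible D g \<longleftrightarrow>
     bij g \<and> preserves_sat g \<and>
     (\<forall>x. g (FVar (Inl x)) \<in> BF (range Inl)) \<and>
     (\<forall>j. g (FVar (Inr j)) \<in> BF (range Inr)) \<and>
     (\<forall>j x. depends_on D (g (FVar (Inr j))) x \<longrightarrow> inv g (FVar (Inl x)) \<in> BF (Inl ` D j))"

definition admissible_group :: "('y \<Rightarrow> 'x set) \<Rightarrow> (('x + 'y) form \<Rightarrow> ('x + 'y) form) set \<Rightarrow> bool" where
  "admissible_group D G \<longleftrightarrow>
     (\<forall>g\<in>G. admissible D g) \<and> id \<in> G \<and>
     (\<forall>g\<in>G. \<forall>h\<in>G. g \<circ> h \<in> G) \<and> (\<forall>g\<in>G. inv g \<in> G)"

text \<open>Interpretations: s_j is a Boolean function of the values of the variables in D_j,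
  represented as a function of a full X-assignment that only depends on D_j.\<close>
definition interps :: "('y \<Rightarrow> 'x set) \<Rightarrow> ('y \<Rightarrow> ('x \<Rightarrow> bool) \<Rightarrow> bool) set" where
  "interps D = {s. \<forall>j \<sigma> \<sigma>'. (\<forall>x\<in>D j. \<sigma> x = \<sigma>' x) \<longrightarrow> s j \<sigma> = s j \<sigma>'}"

definition ext_asg :: "('x \<Rightarrow> bool) \<Rightarrow> ('y \<Rightarrow> ('x \<Rightarrow> bool) \<Rightarrow> bool) \<Rightarrow> ('x + 'y) \<Rightarrow> bool" where
  "ext_asg \<sigma> s = (\<lambda>v. case v of Inl x \<Rightarrow> \<sigma> x | Inr j \<Rightarrow> s j \<sigma>)"

text \<open>g(\<sigma>)(x) = [g(x)]_\<sigma> for \<sigma> \<in> A(X); g(x) \<in> BF(X), so Y-values are irrelevant.\<close>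
definition act_X :: "(('x + 'y) form \<Rightarrow> ('x + 'y) form) \<Rightarrow> ('x \<Rightarrow> bool) \<Rightarrow> 'x \<Rightarrow> bool" where
  "act_X g \<sigma> = (\<lambda>x. eval (\<lambda>v. case v of Inl x' \<Rightarrow> \<sigma> x' | Inr _ \<Rightarrow> False) (g (FVar (Inl x))))"

definition act_interp :: "('y \<Rightarrow> 'x set) \<Rightarrow> (('x + 'y) form \<Rightarrow> ('x + 'y) form)
    \<Rightarrow> ('y \<Rightarrow> ('x \<Rightarrow> bool) \<Rightarrow> bool) \<Rightarrow> ('y \<Rightarrow> ('x \<Rightarrow> bool) \<Rightarrow> bool)" where
  "act_interp D g s = (THE t. t \<in> interps D \<and>
      (\<forall>\<sigma>. ext_asg \<sigma> t = act_asg g (ext_asg (act_X (inv g) \<sigma>) s)))"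

definition assoc_group :: "('y \<Rightarrow> 'x set) \<Rightarrow> (('x + 'y) form \<Rightarrow> ('x + 'y) form) set
    \<Rightarrow> (('y \<Rightarrow> ('x \<Rightarrow> bool) \<Rightarrow> bool) \<Rightarrow> ('y \<Rightarrow> ('x \<Rightarrow> bool) \<Rightarrow> bool)) set" where
  "assoc_group D G = {f. bij_betw f (interps D) (interps D) \<and>
      (\<forall>s\<in>interps D. \<forall>\<sigma>. \<exists>g\<in>G. ext_asg (act_X g \<sigma>) (f s) = act_asg g (ext_asg \<sigma> s))}"

end

theory Submission
  imports Defs
begin

(* On assignments g and g^-1 act as mutually
   inverse maps, and the action of g on X-assignments only reads X-variables. Hence
   t_j(sigma) := [g(y_j)] evaluated at g^-1(sigma)_s is the unique interpretation with
   sigma_t = g(g^-1(sigma)_s); it is an interpretation because g(y_j) only mentions variables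
   y_i whose dependency sets D_i are mapped by g^-1 into formulas over D_j. Transport along
   g^-1 inverts it, so s |-> g(s) is a bijection of S(P), and substituting g(sigma) for sigma
   gives g(sigma)_g(s) = g(sigma_s), with g itself as the required group element. *)

lemma eval_cong:
  "(\<And>v. v \<in> fvars \<phi> \<Longrightarrow> \<rho> v = \<rho>' v) \<Longrightarrow> eval \<rho> \<phi> = eval \<rho>' \<phi>"
  by (induction \<phi>) auto

lemma ext_asg_Inl [simp]: "ext_asg \<sigma> s (Inl x) = \<sigma> x"
  and ext_asg_Inr [simp]: "ext_asg \<sigma> s (Inr j) = s j \<sigma>"
  by (simp_all add: ext_asg_def)

lemma ext_asg_inject:
  assumes "\<And>\<sigma>. ext_asg \<sigma> t = ext_asg \<sigma> t'"
  shows "t = t'"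
proof (intro ext)
  fix j \<sigma>
  show "t j \<sigma> = t' j \<sigma>" using assms[of \<sigma>] ext_asg_Inr by metis
qed

lemma act_asg_inv_act_asg:
  assumes "bij g" and "preserves_sat g"
  shows "act_asg (inv g) (act_asg g \<rho>) = \<rho>"
proof
  fix v
  have "act_asg (inv g) (act_asg g \<rho>) v = eval (act_asg g \<rho>) (inv g (FVar v))"
    by (simp add: act_asg_def)
  also have "\<dots> = eval \<rho> (g (inv g (FVar v)))"
    using assms(2) unfolding preserves_sat_def by simp
  also have "\<dots> = \<rho> v" using assms(1) by (simp add: bij_is_surj surj_f_inv_f)
  finally show "act_asg (inv g) (act_asg g \<rho>) v = \<rho> v" .
qed

lemma act_X_comp_Inl:
  assumes "\<And>x. g (FVar (Inl x)) \<in> BF (range Inl)"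
  shows "act_X g (\<rho> \<circ> Inl) = act_asg g \<rho> \<circ> Inl"
proof
  fix x
  have "fvars (g (FVar (Inl x))) \<subseteq> range Inl" using assms unfolding BF_def by blast
  then show "act_X g (\<rho> \<circ> Inl) x = (act_asg g \<rho> \<circ> Inl) x"
    unfolding act_X_def act_asg_def comp_def by (intro eval_cong) auto
qed

lemma admissible_inv_inv:
  "admissible D g \<Longrightarrow> inv (inv g) = g"
  by (simp add: admissible_def inv_inv_eq)

lemma act_X_inv_act_X:
  fixes g :: "('x + 'y) form \<Rightarrow> ('x + 'y) form"
  assumes "admissible D g" and "admissible D (inv g)"
  shows "act_X (inv g) (act_X g \<sigma>) = \<sigma>"
proof -
  define \<rho> :: "'x + 'y \<Rightarrow> bool" where "\<rho> = case_sum \<sigma> (\<lambda>_. False)"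
  have \<sigma>: "\<sigma> = \<rho> \<circ> Inl" unfolding \<rho>_def by auto
  have "act_X (inv g) (act_X g (\<rho> \<circ> Inl)) = act_asg (inv g) (act_asg g \<rho>) \<circ> Inl"
    using assms by (simp add: act_X_comp_Inl admissible_def)
  also have "\<dots> = \<rho> \<circ> Inl"
    using assms(1) by (simp add: act_asg_inv_act_asg admissible_def)
  finally show ?thesis using \<sigma> by simp
qed

lemma act_X_act_X_inv:
  assumes "admissible D g" and "admissible D (inv g)"
  shows "act_X g (act_X (inv g) \<sigma>) = \<sigma>"
  using act_X_inv_act_X[OF assms(2)] assms admissible_inv_inv by metis

text \<open>The explicit form of g(s), without the description operator of \<^const>\<open>act_interp\<close>.\<close>

definition transport_interp ::
    "(('x + 'y) form \<Rightarrow> ('x + 'y) form) \<Rightarrow> ('y \<Rightarrow> ('x \<Rightarrow> bool) \<Rightarrow> bool) \<Rightarrow> 'y \<Rightarrow> ('x \<Rightarrow> bool) \<Rightarrow> bool"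
  where "transport_interp g s = (\<lambda>j \<sigma>. act_asg g (ext_asg (act_X (inv g) \<sigma>) s) (Inr j))"

lemma ext_asg_transport_interp:
  assumes "admissible D g" and "admissible D (inv g)"
  shows "ext_asg \<sigma> (transport_interp g s) = act_asg g (ext_asg (act_X (inv g) \<sigma>) s)"
proof
  fix v
  show "ext_asg \<sigma> (transport_interp g s) v = act_asg g (ext_asg (act_X (inv g) \<sigma>) s) v"
  proof (cases v)
    case (Inl x)
    have "ext_asg (act_X (inv g) \<sigma>) s \<circ> Inl = act_X (inv g) \<sigma>" by auto
    then have "act_asg g (ext_asg (act_X (inv g) \<sigma>) s) \<circ> Inl = act_X g (act_X (inv g) \<sigma>)"
      using assms(1) act_X_comp_Inl[of g "ext_asg (act_X (inv g) \<sigma>) s"]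
      by (simp add: admissible_def)
    then show ?thesis
      using Inl act_X_act_X_inv[OF assms] by (metis comp_apply ext_asg_Inl)
  next
    case (Inr j)
    then show ?thesis by (simp add: transport_interp_def)
  qed
qed

lemma transport_interp_in_interps:
  fixes g :: "('x + 'y) form \<Rightarrow> ('x + 'y) form"
  assumes "admissible D g" and "s \<in> interps D"
  shows "transport_interp g s \<in> interps D"
  unfolding interps_def
proof (intro CollectI allI impI)
  fix j and \<sigma> \<sigma>' :: "'x \<Rightarrow> bool"
  assume agree: "\<forall>x\<in>D j. \<sigma> x = \<sigma>' x"
  have "ext_asg (act_X (inv g) \<sigma>) s v = ext_asg (act_X (inv g) \<sigma>') s v"
    if v: "v \<in> fvars (g (FVar (Inr j)))" for v
  proof -
    from v obtain i where i: "v = Inr i"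
      using assms(1) unfolding admissible_def BF_def by blast
    have "act_X (inv g) \<sigma> x = act_X (inv g) \<sigma>' x" if x: "x \<in> D i" for x
    proof -
      have "depends_on D (g (FVar (Inr j))) x"
        unfolding depends_on_def using v i x by blast
      then have "fvars (inv g (FVar (Inl x))) \<subseteq> Inl ` D j"
        using assms(1) unfolding admissible_def BF_def by blast
      then show ?thesis unfolding act_X_def using agree by (intro eval_cong) auto
    qed
    then have "s i (act_X (inv g) \<sigma>) = s i (act_X (inv g) \<sigma>')"
      using assms(2) unfolding interps_def by blast
    then show ?thesis using i by simp
  qed
  then show "transport_interp g s j \<sigma> = transport_interp g s j \<sigma>'"
    unfolding transport_interp_def act_asg_def by (rule eval_cong)
qed

lemma act_interp_eq_transport_interp:
  assumes "admissible D g" and "admissible D (inv g)" and "s \<in> interps D"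
  shows "act_interp D g s = transport_interp g s"
  unfolding act_interp_def
proof (rule the_equality)
  show "transport_interp g s \<in> interps D \<and>
      (\<forall>\<sigma>. ext_asg \<sigma> (transport_interp g s) = act_asg g (ext_asg (act_X (inv g) \<sigma>) s))"
    using transport_interp_in_interps[OF assms(1,3)] ext_asg_transport_interp[OF assms(1,2)]
    by blast
next
  fix t
  assume "t \<in> interps D \<and> (\<forall>\<sigma>. ext_asg \<sigma> t = act_asg g (ext_asg (act_X (inv g) \<sigma>) s))"
  then show "t = transport_interp g s"
    using ext_asg_transport_interp[OF assms(1,2)] by (intro ext_asg_inject) simp
qed

lemma transport_interp_inv:
  assumes "admissible D g" and "admissible D (inv g)"
  shows "transport_interp (inv g) (transport_interp g s) = s"
proof (rule ext_asg_inject)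
  fix \<sigma>
  have inv_inv: "inv (inv g) = g" using assms(1) by (rule admissible_inv_inv)
  have "ext_asg \<sigma> (transport_interp (inv g) (transport_interp g s))
      = act_asg (inv g) (ext_asg (act_X g \<sigma>) (transport_interp g s))"
    using ext_asg_transport_interp[of D "inv g"] assms inv_inv by simp
  also have "\<dots> = act_asg (inv g) (act_asg g (ext_asg \<sigma> s))"
    using ext_asg_transport_interp[OF assms] act_X_inv_act_X[OF assms] by simp
  also have "\<dots> = ext_asg \<sigma> s"
    using assms(1) by (simp add: act_asg_inv_act_asg admissible_def)
  finally show "ext_asg \<sigma> (transport_interp (inv g) (transport_interp g s)) = ext_asg \<sigma> s" .
qed

lemma act_interp_inv:
  assumes "admissible D g" and "admissible D (inv g)" and "s \<in> interps D"
  shows "act_interp D g s \<in> interps D" and "act_interp D (inv g) (act_interp D g s) = s"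
proof -
  have inv_inv: "admissible D (inv (inv g))" using assms(1) admissible_inv_inv by metis
  show in_interps: "act_interp D g s \<in> interps D"
    using assms by (simp add: act_interp_eq_transport_interp transport_interp_in_interps)
  show "act_interp D (inv g) (act_interp D g s) = s"
    using act_interp_eq_transport_interp[OF assms(2) inv_inv in_interps]
      act_interp_eq_transport_interp[OF assms] transport_interp_inv[OF assms(1,2)] by simp
qed

lemma bij_betw_act_interp:
  assumes "admissible D g" and "admissible D (inv g)"
  shows "bij_betw (act_interp D g) (interps D) (interps D)"
proof (rule bij_betw_byWitness[where f' = "act_interp D (inv g)"])
  have inv_inv: "inv (inv g) = g" using assms(1) by (rule admissible_inv_inv)
  note act_g = act_interp_inv[OF assms]
    and act_inv_g = act_interp_inv[OF assms(2), unfolded inv_inv, OF assms(1)]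
  show "\<forall>s\<in>interps D. act_interp D (inv g) (act_interp D g s) = s" using act_g by blast
  show "\<forall>s\<in>interps D. act_interp D g (act_interp D (inv g) s) = s" using act_inv_g by blast
  show "act_interp D g ` interps D \<subseteq> interps D" using act_g by blast
  show "act_interp D (inv g) ` interps D \<subseteq> interps D" using act_inv_g by blast
qed

lemma ext_asg_act_interp:
  assumes "admissible D g" and "admissible D (inv g)" and "s \<in> interps D"
  shows "ext_asg (act_X g \<sigma>) (act_interp D g s) = act_asg g (ext_asg \<sigma> s)"
  using assms by (simp add: act_interp_eq_transport_interp ext_asg_transport_interp act_X_inv_act_X)

theorem lemma4:
  fixes D :: "'y::finite \<Rightarrow> 'x::finite set"
    and G :: "(('x + 'y) form \<Rightarrow> ('x + 'y) form) set"
  assumes "admissible_group D G"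
    and "g \<in> G"
  shows "act_interp D g \<in> assoc_group D G"
proof -
  have g: "admissible D g" and inv_g: "admissible D (inv g)"
    using assms unfolding admissible_group_def by auto
  have "\<forall>s\<in>interps D. \<forall>\<sigma>. ext_asg (act_X g \<sigma>) (act_interp D g s) = act_asg g (ext_asg \<sigma> s)"
    using ext_asg_act_interp[OF g inv_g] by blast
  then show ?thesis
    unfolding assoc_group_def using bij_betw_act_interp[OF g inv_g] assms(2) by blast
qed

end
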